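(* Let $X=X_1\times\cdots\times X_n$ be a finite product space, $\theta:X\to\mathbb{R}\cup\{-\infty\}$ a potential function and $Z=\sum_{x\in X}\exp(\theta(x))$. Let $\mathcal{A}$ be a finite nonempty family of subsets $\alpha\subseteq\{1,\dots,n\}$, and for $\alpha\in\mathcal{A}$ let $x_\alpha=(x_i)_{i\in\alpha}$. Assume the random variables $\gamma_\alpha(x_\alpha)$, over all $\alpha\in\mathcal{A}$ and all assignments $x_\alpha$, are i.i.d. following the zero-mean Gumbel distribution. Then for every $\alpha\in\mathcal{A}$, $$\log Z\ge E_\gamma\Big[\max_x\big\{\theta(x)+\gamma_\alpha(x_\alpha)\big\}\Big].$$ In particular, $\log Z\ge E_\gamma\Big[\max_x\big\{\theta(x)+\frac{1}{|\mathcal{A}|}\sum_{\alpha\in\mathcal{A}}\gamma_\alpha(x_\alpha)\big\}\Big]$.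
   Context: The zero-mean Gumbel distribution is the distribution with cumulative distribution function $F(t)=\exp(-\exp(-(t+c)))$, where $c$ is the Euler constant. *)

theory Defs
  imports "HOL-Probability.Probability"
begin

definition gumbel0_cdf :: "real \<Rightarrow> real" where
  "gumbel0_cdf t = exp (- exp (- (t + euler_mascheroni)))"

end

theory Submission
  imports Defs
begin

text \<open>
  If \<open>T\<close> is standard exponential, \<open>- ln T - \<gamma>\<close> has the zero-mean Gumbel law, and its mean
  vanishes because \<open>E[ln T] = \<Gamma>'(1) = -\<gamma>\<close>. The zero-mean Gumbel law is max-stable: for
  independent such \<open>X\<^sub>y\<close>, \<open>max\<^sub>y (b\<^sub>y + X\<^sub>y) - ln \<Sum>\<^sub>y exp b\<^sub>y\<close> is again zero-mean
  Gumbel, so \<open>E[max\<^sub>y (b\<^sub>y + X\<^sub>y)] = ln \<Sum>\<^sub>y exp b\<^sub>y\<close>. When the noise only depends on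
  \<open>x\<^sub>\<alpha>\<close>, raising \<open>\<theta>\<close> on each fibre \<open>{x. x\<^sub>\<alpha> = y}\<close> to the log-sum-exp over that fibre
  can only increase the maximum, and the max-stability identity for the fibres gives back
  \<open>ln Z\<close>. The averaged bound follows because the maximum of an average is at most the
  average of the maxima.
\<close>

lemma has_bochner_integral_Gamma:
  fixes x :: real
  assumes "x > 0"
  shows "has_bochner_integral lborel (\<lambda>t. indicator {0<..} t * (t powr (x - 1) * exp (- t))) (Gamma x)"
proof -
  have Gamma: "((\<lambda>t. t powr (x - 1) / exp t) has_integral Gamma x) {0..}"
    using Gamma_integral_real[OF assms] .
  then have "(\<lambda>t. t powr (x - 1) / exp t) absolutely_integrable_on {0..}"
    by (intro nonnegative_absolutely_integrable_1) auto
  then have integrable: "set_integrable lborel {0..} (\<lambda>t. t powr (x - 1) / exp t)"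
    unfolding set_integrable_def by (subst (asm) integrable_completion) auto
  moreover have "(LINT t:{0..}|lborel. t powr (x - 1) / exp t) = Gamma x"
    using set_borel_integral_eq_integral(2)[OF integrable] Gamma by (simp add: integral_unique)
  moreover have "(\<lambda>t. indicator {0..} t *\<^sub>R (t powr (x - 1) / exp t))
      = (\<lambda>t. indicator {0<..} t * (t powr (x - 1) * exp (- t)))"
    by (auto simp: indicator_def fun_eq_iff exp_minus field_simps)
  ultimately show ?thesis
    by (simp add: has_bochner_integral_iff set_integrable_def set_lebesgue_integral_def)
qed

lemma abs_ln_le_inverse_sqrt_plus:
  fixes t :: real
  assumes "t > 0"
  shows "\<bar>ln t\<bar> \<le> 2 * t powr (- 1 / 2) + t"
proof (cases "t \<ge> 1")
  case True
  moreover have "0 \<le> t powr (- 1 / 2)" "0 \<le> ln t" using True by simp_all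
  ultimately show ?thesis using ln_le_minus_one[OF assms] by linarith
next
  case False
  have "ln (t powr (- 1 / 2)) \<le> t powr (- 1 / 2) - 1"
    using assms by (intro ln_le_minus_one) simp
  then show ?thesis using False assms by (simp add: ln_powr)
qed

lemma integrable_ln_exp:
  "integrable lborel (\<lambda>t. indicator {0<..} t * (ln t * exp (- t)) :: real)"
proof (rule Bochner_Integration.integrable_bound)
  let ?g = "\<lambda>x t. indicator {0<..} t * (t powr (x - 1) * exp (- t)) :: real"
  show "integrable lborel (\<lambda>t. 2 * ?g (1 / 2) t + ?g 2 t)"
    using has_bochner_integral_Gamma[of "1/2"] has_bochner_integral_Gamma[of 2]
    by (simp add: has_bochner_integral_iff)
  have "\<bar>ln t\<bar> * exp (- t) \<le> (2 * t powr (- 1 / 2) + t) * exp (- t)" if "t > 0" for t :: real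
    using abs_ln_le_inverse_sqrt_plus[OF that] by (intro mult_right_mono) auto
  then show "AE t in lborel. norm (indicator {0<..} t * (ln t * exp (- t)))
      \<le> norm (2 * ?g (1 / 2) t + ?g 2 t)"
    by (intro AE_I2) (auto simp: indicator_def abs_mult algebra_simps)
qed measurable

lemma has_bochner_integral_ln_exp:
  "has_bochner_integral lborel (\<lambda>t. indicator {0<..} t * (ln t * exp (- t)) :: real) (- euler_mascheroni)"
proof -
  let ?g = "\<lambda>x t. indicator {0<..} t * (t powr (x - 1) * exp (- t)) :: real"
  define I where "I = integral\<^sup>L lborel (\<lambda>t. indicator {0<..} t * (ln t * exp (- t)) :: real)"
  \<comment> \<open>From \<open>t powr h \<ge> 1 + h ln t\<close>; dividing by \<open>h\<close> makes the difference quotients of \<open>\<Gamma>\<close>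
      at 1 upper bounds of \<open>I\<close> for \<open>h > 0\<close> and lower bounds for \<open>h < 0\<close>.\<close>
  have Gamma_ge: "1 + h * I \<le> Gamma (1 + h)" if "h > -1" for h :: real
  proof -
    have "1 + h * I = integral\<^sup>L lborel (\<lambda>t. ?g 1 t + h * (indicator {0<..} t * (ln t * exp (- t))))"
      using has_bochner_integral_Gamma[of 1] integrable_ln_exp
      by (simp add: I_def has_bochner_integral_iff)
    also have "\<dots> \<le> integral\<^sup>L lborel (?g (1 + h))"
    proof (rule integral_mono)
      show "integrable lborel (\<lambda>t. ?g 1 t + h * (indicator {0<..} t * (ln t * exp (- t))))"
        using has_bochner_integral_Gamma[of 1] integrable_ln_exp
        by (simp add: has_bochner_integral_iff)
      show "integrable lborel (?g (1 + h))"
        using has_bochner_integral_Gamma[of "1 + h"] that by (simp add: has_bochner_integral_iff)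
      have "(1 + h * ln t) * exp (- t) \<le> t powr h * exp (- t)" if "t > 0" for t :: real
        using exp_ge_add_one_self[of "h * ln t"] that by (intro mult_right_mono) (simp_all add: powr_def)
      then show "?g 1 t + h * (indicator {0<..} t * (ln t * exp (- t))) \<le> ?g (1 + h) t" for t
        by (cases "t > 0") (simp_all add: algebra_simps)
    qed
    also have "\<dots> = Gamma (1 + h)"
      using has_bochner_integral_Gamma[of "1 + h"] that by (simp add: has_bochner_integral_iff)
    finally show ?thesis .
  qed
  have "(Gamma has_field_derivative Gamma 1 * Digamma 1) (at (1::real))"
    by (rule has_field_derivative_Gamma) (auto elim!: nonpos_Ints_cases)
  then have "((\<lambda>h. (Gamma (1 + h) - 1) / h) \<longlongrightarrow> - euler_mascheroni) (at (0::real))"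
    using DERIV_D by fastforce
  then have lim_left: "((\<lambda>h. (Gamma (1 + h) - 1) / h) \<longlongrightarrow> - euler_mascheroni) (at_left (0::real))"
    and lim_right: "((\<lambda>h. (Gamma (1 + h) - 1) / h) \<longlongrightarrow> - euler_mascheroni) (at_right (0::real))"
    by (simp_all add: filterlim_at_split)
  have "\<forall>\<^sub>F h in at_left 0. (Gamma (1 + h) - 1) / h \<le> I"
    unfolding eventually_at_left_field using Gamma_ge
    by (intro exI[of _ "-1"]) (auto simp: field_simps)
  then have "- euler_mascheroni \<le> I"
    by (rule tendsto_upperbound[OF lim_left]) simp
  moreover have "\<forall>\<^sub>F h in at_right 0. I \<le> (Gamma (1 + h) - 1) / h"
    unfolding eventually_at_right_field using Gamma_ge
    by (intro exI[of _ 1]) (auto simp: field_simps)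
  then have "I \<le> - euler_mascheroni"
    by (rule tendsto_lowerbound[OF lim_right]) simp
  ultimately show ?thesis
    using integrable_ln_exp by (simp add: I_def has_bochner_integral_iff)
qed

abbreviation standard_exponential :: "real measure" where
  "standard_exponential \<equiv> density lborel (exponential_density 1)"

lemma prob_space_standard_exponential: "prob_space standard_exponential"
  by (rule prob_space_exponential_density) simp

lemma has_bochner_integral_ln_standard_exponential:
  "has_bochner_integral standard_exponential ln (- euler_mascheroni)"
proof (rule has_bochner_integral_density)
  have "(\<lambda>t. exponential_density 1 t *\<^sub>R ln t) = (\<lambda>t. indicator {0<..} t * (ln t * exp (- t)))"
    by (auto simp: exponential_density_def fun_eq_iff indicator_def)
  then show "has_bochner_integral lborel (\<lambda>t. exponential_density 1 t *\<^sub>R ln t) (- euler_mascheroni)"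
    using has_bochner_integral_ln_exp by simp
qed (auto simp: exponential_density_nonneg)

lemma cdf_neg_ln_standard_exponential:
  "cdf (distr standard_exponential borel (\<lambda>t. - ln t - euler_mascheroni)) = gumbel0_cdf"
proof
  fix x :: real
  define a where "a = exp (- (x + euler_mascheroni))"
  have "0 < a" by (simp add: a_def)
  have "AE t in lborel. t \<noteq> 0"
    by (rule AE_lborel_singleton)
  then have "AE t in standard_exponential. 0 < t"
    by (subst AE_density) (auto simp: exponential_density_def elim!: AE_mp)
  then have "AE t in standard_exponential. (- ln t - euler_mascheroni \<le> x) = (a \<le> t)"
  proof eventually_elim
    case (elim t)
    have "(- ln t - euler_mascheroni \<le> x) = (ln a \<le> ln t)"
      by (auto simp: a_def)
    also have "\<dots> = (a \<le> t)"
      using elim by (simp add: \<open>0 < a\<close>)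
    finally show ?case .
  qed
  moreover have "AE t in standard_exponential. t \<noteq> a"
    using AE_lborel_singleton[of a] by (subst AE_density) (auto elim!: AE_mp)
  ultimately have "AE t in standard_exponential. (- ln t - euler_mascheroni \<le> x) = (a < t)"
    by eventually_elim auto
  then have "measure standard_exponential {t. - ln t - euler_mascheroni \<le> x}
      = measure standard_exponential {t. a < t}"
    by (intro measure_eq_AE) auto
  also have "\<dots> = exp (- a)"
    using prob_space.exponential_distributedD_gt[OF prob_space_standard_exponential, of "\<lambda>t. t" 1 a]
    by (simp add: a_def distributed_def distr_id2)
  finally show "cdf (distr standard_exponential borel (\<lambda>t. - ln t - euler_mascheroni)) x = gumbel0_cdf x"
    by (simp add: cdf_def measure_distr vimage_def gumbel0_cdf_def a_def)
qed

lemma (in prob_space) has_bochner_integral_gumbel0: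
  assumes [measurable]: "W \<in> borel_measurable M"
    and "cdf (distr M borel W) = gumbel0_cdf"
  shows "has_bochner_integral M W 0"
proof -
  interpret E: prob_space standard_exponential
    by (rule prob_space_standard_exponential)
  have distr_eq: "distr M borel W = distr standard_exponential borel (\<lambda>t. - ln t - euler_mascheroni)"
    using assms(2) cdf_neg_ln_standard_exponential
    by (intro cdf_unique real_distribution_distr E.real_distribution_distr) auto
  have "has_bochner_integral standard_exponential (\<lambda>t. - ln t - euler_mascheroni) 0"
    using has_bochner_integral_ln_standard_exponential
    by (simp add: has_bochner_integral_iff E.prob_space[simplified])
  then have "has_bochner_integral (distr M borel W) (\<lambda>x. x) 0"
    unfolding distr_eq by (intro has_bochner_integral_distr) auto
  then show ?thesis
    by (simp add: has_bochner_integral_iff integrable_distr_eq integral_distr)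
qed

lemma (in prob_space) cdf_Max_plus_gumbel0:
  fixes X :: "'i \<Rightarrow> 'a \<Rightarrow> real" and b :: "'i \<Rightarrow> real"
  assumes S: "finite S" "S \<noteq> {}"
    and indep: "indep_vars (\<lambda>_. borel) X S"
    and gumbel: "\<And>y. y \<in> S \<Longrightarrow> cdf (distr M borel (X y)) = gumbel0_cdf"
  shows "cdf (distr M borel (\<lambda>\<omega>. Max ((\<lambda>y. b y + X y \<omega>) ` S) - ln (\<Sum>y\<in>S. exp (b y))))
    = gumbel0_cdf"
proof
  fix t
  define L where "L = ln (\<Sum>y\<in>S. exp (b y))"
  have exp_L: "exp L = (\<Sum>y\<in>S. exp (b y))"
    using S by (simp add: L_def sum_pos)
  have [measurable]: "X y \<in> borel_measurable M" if "y \<in> S" for y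
    using indep that by (simp add: indep_vars_def)
  have "cdf (distr M borel (\<lambda>\<omega>. Max ((\<lambda>y. b y + X y \<omega>) ` S) - L)) t
      = prob (\<Inter>y\<in>S. X y -` {.. t + L - b y} \<inter> space M)"
  proof -
    have "(Max ((\<lambda>y. b y + X y \<omega>) ` S) - L \<le> t) = (\<forall>y\<in>S. X y \<omega> \<le> t + L - b y)" for \<omega>
      using S by (auto simp: Max_le_iff algebra_simps)
    then show ?thesis
      using S by (auto simp: cdf_def measure_distr intro!: arg_cong[where f = prob])
  qed
  also have "\<dots> = (\<Prod>y\<in>S. prob (X y -` {.. t + L - b y} \<inter> space M))"
    using S by (intro indep_varsD[OF indep]) auto
  also have "\<dots> = (\<Prod>y\<in>S. exp (- (exp (- (t + euler_mascheroni)) * exp (- L) * exp (b y))))"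
  proof (intro prod.cong refl)
    fix y assume "y \<in> S"
    then have "prob (X y -` {.. t + L - b y} \<inter> space M) = cdf (distr M borel (X y)) (t + L - b y)"
      by (simp add: cdf_def measure_distr)
    also have "\<dots> = gumbel0_cdf (t + L - b y)"
      using gumbel \<open>y \<in> S\<close> by simp
    finally show "prob (X y -` {.. t + L - b y} \<inter> space M)
        = exp (- (exp (- (t + euler_mascheroni)) * exp (- L) * exp (b y)))"
      by (simp add: gumbel0_cdf_def algebra_simps flip: exp_add)
  qed
  also have "\<dots> = exp (- (exp (- (t + euler_mascheroni)) * exp (- L) * exp L))"
    using S by (simp add: sum_negf exp_L flip: exp_sum sum_distrib_left)
  also have "\<dots> = gumbel0_cdf t"
    by (simp add: gumbel0_cdf_def flip: exp_add)
  finally show "cdf (distr M borel (\<lambda>\<omega>. Max ((\<lambda>y. b y + X y \<omega>) ` S) - L)) t = gumbel0_cdf t" .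
qed

lemma (in prob_space) has_bochner_integral_Max_plus_gumbel0:
  fixes X :: "'i \<Rightarrow> 'a \<Rightarrow> real" and b :: "'i \<Rightarrow> real"
  assumes S: "finite S" "S \<noteq> {}"
    and indep: "indep_vars (\<lambda>_. borel) X S"
    and gumbel: "\<And>y. y \<in> S \<Longrightarrow> cdf (distr M borel (X y)) = gumbel0_cdf"
  shows "has_bochner_integral M (\<lambda>\<omega>. Max ((\<lambda>y. b y + X y \<omega>) ` S)) (ln (\<Sum>y\<in>S. exp (b y)))"
proof -
  define L where "L = ln (\<Sum>y\<in>S. exp (b y))"
  have [measurable]: "X y \<in> borel_measurable M" if "y \<in> S" for y
    using indep that by (simp add: indep_vars_def)
  have "has_bochner_integral M (\<lambda>\<omega>. Max ((\<lambda>y. b y + X y \<omega>) ` S) - L) 0"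
    using S by (intro has_bochner_integral_gumbel0 cdf_Max_plus_gumbel0[OF S indep gumbel, of b, folded L_def])
      (auto intro!: borel_measurable_Max)
  moreover have "has_bochner_integral M (\<lambda>_. L) L"
    by (simp add: has_bochner_integral_iff prob_space)
  ultimately have "has_bochner_integral M (\<lambda>\<omega>. (Max ((\<lambda>y. b y + X y \<omega>) ` S) - L) + L) (0 + L)"
    by (rule has_bochner_integral_add)
  then show ?thesis
    by (simp add: L_def)
qed

lemma (in prob_space) indep_sets_reindex:
  assumes inj: "inj_on f J" and indep: "indep_sets F (f ` J)"
  shows "indep_sets (F \<circ> f) J"
proof (rule indep_setsI)
  show "(F \<circ> f) j \<subseteq> events" if "j \<in> J" for j
    using indep that by (auto simp: indep_sets_def)
next
  fix A K assume K: "K \<noteq> {}" "K \<subseteq> J" "finite K" and A: "\<forall>j\<in>K. A j \<in> (F \<circ> f) j"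
  have inj_K: "inj_on f K"
    using inj K(2) by (rule inj_on_subset)
  have "prob (\<Inter>i\<in>f ` K. A (the_inv_into K f i)) = (\<Prod>i\<in>f ` K. prob (A (the_inv_into K f i)))"
    using K A inj_K by (intro indep_setsD[OF indep]) (auto simp: the_inv_into_f_f)
  then show "prob (\<Inter>j\<in>K. A j) = (\<Prod>j\<in>K. prob (A j))"
    using inj_K by (simp add: prod.reindex the_inv_into_f_f)
qed

lemma (in prob_space) indep_vars_reindex:
  assumes "inj_on f J" "indep_vars M' X (f ` J)"
  shows "indep_vars (M' \<circ> f) (X \<circ> f) J"
  using assms indep_sets_reindex[OF assms(1), of "\<lambda>i. {X i -` A \<inter> space M | A. A \<in> sets (M' i)}"]
  by (auto simp: indep_vars_def2 comp_def)

lemma integrable_Max: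
  fixes f :: "'i \<Rightarrow> 'a \<Rightarrow> real"
  assumes "finite I" "I \<noteq> {}" "\<And>i. i \<in> I \<Longrightarrow> integrable M (f i)"
  shows "integrable M (\<lambda>\<omega>. Max ((\<lambda>i. f i \<omega>) ` I))"
  using assms
proof (induction I rule: finite_ne_induct)
  case (insert i I)
  then have "integrable M (\<lambda>\<omega>. max (f i \<omega>) (Max ((\<lambda>i. f i \<omega>) ` I)))"
    by (intro integrable_max) auto
  then show ?case
    using insert by simp
qed simp

lemma (in prob_space) integral_Max_plus_gumbel0_comp_le:
  fixes X :: "'i \<Rightarrow> 'a \<Rightarrow> real" and t :: "'x \<Rightarrow> real" and g :: "'x \<Rightarrow> 'i"
  assumes D: "finite D" "D \<noteq> {}" and g: "g ` D \<subseteq> S"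
    and indep: "indep_vars (\<lambda>_. borel) X S"
    and gumbel: "\<And>y. y \<in> S \<Longrightarrow> cdf (distr M borel (X y)) = gumbel0_cdf"
  shows "(\<integral>\<omega>. Max ((\<lambda>x. t x + X (g x) \<omega>) ` D) \<partial>M) \<le> ln (\<Sum>x\<in>D. exp (t x))"
proof -
  have "has_bochner_integral M (X y) 0" if "y \<in> S" for y
    using indep that gumbel by (intro has_bochner_integral_gumbel0) (auto simp: indep_vars_def)
  then have integrable: "integrable M (\<lambda>\<omega>. Max ((\<lambda>x. t x + X (g x) \<omega>) ` D))"
    using D g by (intro integrable_Max) (auto simp: has_bochner_integral_iff)
  define fibre where "fibre y = {x \<in> D. g x = y}" for y
  define b where "b y = ln (\<Sum>x\<in>fibre y. exp (t x))" for y
  have exp_b: "exp (b y) = (\<Sum>x\<in>fibre y. exp (t x))" if "y \<in> g ` D" for y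
    using that D by (auto simp: b_def fibre_def intro!: sum_pos)
  have Max_fibres: "has_bochner_integral M (\<lambda>\<omega>. Max ((\<lambda>y. b y + X y \<omega>) ` g ` D))
      (ln (\<Sum>y\<in>g ` D. exp (b y)))"
    using D g gumbel by (intro has_bochner_integral_Max_plus_gumbel0 indep_vars_subset[OF indep]) auto
  have t_le_b: "t x \<le> b (g x)" if "x \<in> D" for x
  proof -
    have "exp (t x) \<le> exp (b (g x))"
      using that D by (auto simp: exp_b fibre_def intro!: member_le_sum)
    then show ?thesis by simp
  qed
  have "(\<integral>\<omega>. Max ((\<lambda>x. t x + X (g x) \<omega>) ` D) \<partial>M) \<le> (\<integral>\<omega>. Max ((\<lambda>y. b y + X y \<omega>) ` g ` D) \<partial>M)"
  proof (rule integral_mono[OF integrable])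
    show "integrable M (\<lambda>\<omega>. Max ((\<lambda>y. b y + X y \<omega>) ` g ` D))"
      using Max_fibres by (simp add: has_bochner_integral_iff)
    show "Max ((\<lambda>x. t x + X (g x) \<omega>) ` D) \<le> Max ((\<lambda>y. b y + X y \<omega>) ` g ` D)" for \<omega>
    proof (subst Max_le_iff, use D in simp_all, intro ballI)
      fix x assume "x \<in> D"
      then have "t x + X (g x) \<omega> \<le> b (g x) + X (g x) \<omega>"
        using t_le_b by simp
      also have "\<dots> \<le> Max ((\<lambda>y. b y + X y \<omega>) ` g ` D)"
        using D \<open>x \<in> D\<close> by (intro Max_ge) auto
      finally show "t x + X (g x) \<omega> \<le> Max ((\<lambda>y. b y + X y \<omega>) ` g ` D)" .
    qed
  qed
  also have "\<dots> = ln (\<Sum>y\<in>g ` D. \<Sum>x\<in>fibre y. exp (t x))"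
    using Max_fibres exp_b by (simp add: has_bochner_integral_iff)
  also have "(\<Sum>y\<in>g ` D. \<Sum>x\<in>fibre y. exp (t x)) = (\<Sum>x\<in>D. exp (t x))"
    unfolding fibre_def using D by (intro sum.group) auto
  finally show ?thesis .
qed

lemma integral_Max_average_le:
  fixes f :: "'i \<Rightarrow> 'x \<Rightarrow> 'a \<Rightarrow> real"
  assumes A: "finite A" "A \<noteq> {}" and D: "finite D" "D \<noteq> {}"
    and integrable: "\<And>\<alpha> x. \<alpha> \<in> A \<Longrightarrow> x \<in> D \<Longrightarrow> integrable M (f \<alpha> x)"
    and bound: "\<And>\<alpha>. \<alpha> \<in> A \<Longrightarrow> (\<integral>\<omega>. Max ((\<lambda>x. f \<alpha> x \<omega>) ` D) \<partial>M) \<le> c"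
  shows "(\<integral>\<omega>. Max ((\<lambda>x. (\<Sum>\<alpha>\<in>A. f \<alpha> x \<omega>) / card A) ` D) \<partial>M) \<le> c"
proof -
  have card_A: "real (card A) > 0"
    using A by (simp add: card_gt_0_iff)
  have integrable_Max_f: "integrable M (\<lambda>\<omega>. Max ((\<lambda>x. f \<alpha> x \<omega>) ` D))" if "\<alpha> \<in> A" for \<alpha>
    using D integrable that by (intro integrable_Max) auto
  have "(\<integral>\<omega>. Max ((\<lambda>x. (\<Sum>\<alpha>\<in>A. f \<alpha> x \<omega>) / card A) ` D) \<partial>M)
      \<le> (\<integral>\<omega>. (\<Sum>\<alpha>\<in>A. Max ((\<lambda>x. f \<alpha> x \<omega>) ` D)) / card A \<partial>M)"
  proof (rule integral_mono)
    show "integrable M (\<lambda>\<omega>. Max ((\<lambda>x. (\<Sum>\<alpha>\<in>A. f \<alpha> x \<omega>) / card A) ` D))"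
      using D integrable by (intro integrable_Max integrable_divide integrable_sum) auto
    show "integrable M (\<lambda>\<omega>. (\<Sum>\<alpha>\<in>A. Max ((\<lambda>x. f \<alpha> x \<omega>) ` D)) / card A)"
      using integrable_Max_f by (intro integrable_divide integrable_sum) auto
    show "Max ((\<lambda>x. (\<Sum>\<alpha>\<in>A. f \<alpha> x \<omega>) / card A) ` D) \<le> (\<Sum>\<alpha>\<in>A. Max ((\<lambda>x. f \<alpha> x \<omega>) ` D)) / card A"
      for \<omega>
      using D card_A by (auto intro!: divide_right_mono sum_mono Max_ge)
  qed
  also have "\<dots> = (\<Sum>\<alpha>\<in>A. \<integral>\<omega>. Max ((\<lambda>x. f \<alpha> x \<omega>) ` D) \<partial>M) / card A"
    using integrable_Max_f by (simp add: integral_sum)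
  also have "\<dots> \<le> (\<Sum>\<alpha>\<in>A. c) / card A"
    using bound card_A by (intro divide_right_mono sum_mono) auto
  also have "\<dots> = c"
    using card_A by simp
  finally show ?thesis .
qed

theorem corollary1:
  fixes n :: nat and Xs :: "nat \<Rightarrow> 'a set" and \<theta> :: "(nat \<Rightarrow> 'a) \<Rightarrow> ereal"
    and \<A> :: "nat set set" and M :: "'w measure"
    and \<gamma> :: "nat set \<Rightarrow> (nat \<Rightarrow> 'a) \<Rightarrow> 'w \<Rightarrow> real"
  defines "D \<equiv> {x \<in> PiE {1..n} Xs. \<theta> x \<noteq> -\<infinity>}"
  assumes fin: "\<forall>i\<in>{1..n}. finite (Xs i)"
    and pot: "\<forall>x\<in>PiE {1..n} Xs. \<theta> x \<noteq> \<infinity>"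
    and nontriv: "D \<noteq> {}"
    and A: "finite \<A>" "\<A> \<noteq> {}" "\<forall>\<alpha>\<in>\<A>. \<alpha> \<subseteq> {1..n}"
    and P: "prob_space M"
    and indep: "prob_space.indep_vars M (\<lambda>_. borel) (\<lambda>(\<alpha>, y). \<gamma> \<alpha> y) (SIGMA \<alpha>:\<A>. PiE \<alpha> Xs)"
    and gumbel: "\<forall>\<alpha>\<in>\<A>. \<forall>y\<in>PiE \<alpha> Xs. cdf (distr M borel (\<gamma> \<alpha> y)) = gumbel0_cdf"
  shows "(\<forall>\<alpha>\<in>\<A>. ln (\<Sum>x\<in>D. exp (real_of_ereal (\<theta> x)))
            \<ge> (\<integral>\<omega>. Max ((\<lambda>x. real_of_ereal (\<theta> x) + \<gamma> \<alpha> (restrict x \<alpha>) \<omega>) ` D) \<partial>M))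
       \<and> ln (\<Sum>x\<in>D. exp (real_of_ereal (\<theta> x)))
            \<ge> (\<integral>\<omega>. Max ((\<lambda>x. real_of_ereal (\<theta> x)
                   + (1 / real (card \<A>)) * (\<Sum>\<alpha>\<in>\<A>. \<gamma> \<alpha> (restrict x \<alpha>) \<omega>)) ` D) \<partial>M)"
proof -
  interpret prob_space M by (rule P)
  have "finite (PiE {1..n} Xs)"
    using fin by (intro finite_PiE) auto
  then have D_fin: "finite D"
    by (rule rev_finite_subset) (auto simp: D_def)
  have restrict_D: "restrict x \<alpha> \<in> PiE \<alpha> Xs" if "x \<in> D" "\<alpha> \<in> \<A>" for x \<alpha>
    using that A(3) by (auto simp: D_def PiE_iff)
  have indep_\<alpha>: "indep_vars (\<lambda>_. borel) (\<gamma> \<alpha>) (PiE \<alpha> Xs)" if "\<alpha> \<in> \<A>" for \<alpha>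
    using indep_vars_reindex[of "Pair \<alpha>" "PiE \<alpha> Xs" "\<lambda>_. borel" "\<lambda>(\<alpha>, y). \<gamma> \<alpha> y"]
      indep_vars_subset[OF indep, of "Pair \<alpha> ` PiE \<alpha> Xs"] that
    by (auto simp: inj_on_def comp_def)
  have single: "(\<integral>\<omega>. Max ((\<lambda>x. real_of_ereal (\<theta> x) + \<gamma> \<alpha> (restrict x \<alpha>) \<omega>) ` D) \<partial>M)
      \<le> ln (\<Sum>x\<in>D. exp (real_of_ereal (\<theta> x)))" if "\<alpha> \<in> \<A>" for \<alpha>
    using that gumbel restrict_D
    by (intro integral_Max_plus_gumbel0_comp_le[OF D_fin nontriv _ indep_\<alpha>] image_subsetI) auto
  have "integrable M (\<gamma> \<alpha> y)" if "\<alpha> \<in> \<A>" "y \<in> PiE \<alpha> Xs" for \<alpha> y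
    using has_bochner_integral_gumbel0[of "\<gamma> \<alpha> y"] indep_\<alpha> gumbel that
    by (auto simp: indep_vars_def has_bochner_integral_iff)
  then have "(\<integral>\<omega>. Max ((\<lambda>x. (\<Sum>\<alpha>\<in>\<A>. real_of_ereal (\<theta> x) + \<gamma> \<alpha> (restrict x \<alpha>) \<omega>) / card \<A>) ` D) \<partial>M)
      \<le> ln (\<Sum>x\<in>D. exp (real_of_ereal (\<theta> x)))"
    using restrict_D single by (intro integral_Max_average_le[OF A(1,2) D_fin nontriv]) auto
  moreover have "(\<Sum>\<alpha>\<in>\<A>. real_of_ereal (\<theta> x) + \<gamma> \<alpha> (restrict x \<alpha>) \<omega>) / card \<A>
      = real_of_ereal (\<theta> x) + (1 / real (card \<A>)) * (\<Sum>\<alpha>\<in>\<A>. \<gamma> \<alpha> (restrict x \<alpha>) \<omega>)" for x \<omega>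
    using A(1,2) by (simp add: sum.distrib field_simps)
  ultimately show ?thesis
    using single by simp
qed

end
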